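(* Let $p,n\in\mathbb{N}$ with $p,n\ge1$, $r\in\mathbb{N}$ with $r\le p$, and assume $n\ge\max\{2p-\lfloor p/2\rfloor,\;2p-2\lfloor p/2\rfloor+1\}$. Then $$X^{p,r,1}=n^{2r-1}\big(T_n^{\bm\alpha}+H_n^{\bm\alpha,1}\big),$$ where $\alpha_k=(-1)^r\mathcal{N}_{2p+1}^{(2r)}(p+1-k)$, $k=0,\dots,p$.
   Context: Cardinal B-spline: $\mathcal{N}_0(t)=1$ for $t\in[0,1)$, $0$ otherwise; $\mathcal{N}_p(t)=\frac{t}{p}\mathcal{N}_{p-1}(t)+\frac{p+1-t}{p}\mathcal{N}_{p-1}(t-1)$, $p\ge1$ (support $[0,p+1]$, $C^{p-1}$). Neumann basis: for $c\in\mathbb{R}$ put $C_c(x)=\mathcal{N}_p\big(nx-c+\tfrac{p+1}{2}\big)$ (B-spline centred at $c/n$), and for $i=1,\dots,n$, $x\in[0,1]$, $$N^p_{i,1}(x)=\sum_{m\in\mathbb{Z}}\Big(C_{i-\frac12+2mn}(x)+C_{-(i-\frac12)+2mn}(x)\Big).$$ These form a basis of the $C^{p-1}$ splines of degree $p$ with breakpoints $(k+\frac12)/n$ ($p$ odd) or $k/n$ ($p$ even) whose derivatives of all odd orders $\le p$ vanish at $0$ and $1$. $X^{p,r,1}_{i,j}=\int_0^1(N^p_{i,1})^{(r)}(N^p_{j,1})^{(r)}\,\mathrm{d}x$ (piecewise derivatives if $r=p$). For $\bm\alpha\in\mathbb{R}^{p+1}$, $n\ge p+1$, with $\alpha_k=0$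 for $k>p$: $(T_n^{\bm\alpha})_{i,j}=\alpha_{|i-j|}$ and $(H_n^{\bm\alpha,1})_{i,j}=\alpha_{i+j-1}+\alpha_{2n+1-i-j}$. *)

theory Defs
  imports "HOL-Analysis.Analysis"
begin

fun cardBspline :: "nat \<Rightarrow> real \<Rightarrow> real" where
  "cardBspline 0 t = (if 0 \<le> t \<and> t < 1 then 1 else 0)"
| "cardBspline (Suc p) t =
     t / real (Suc p) * cardBspline p t
     + (real (Suc p) + 1 - t) / real (Suc p) * cardBspline p (t - 1)"

text \<open>r-th derivative (iterated deriv). At the finitely many breakpoints where a
  classical derivative fails to exist the value is unspecified; this does not affect
  integrals (piecewise derivative).\<close>
definition nth_deriv :: "nat \<Rightarrow> (real \<Rightarrow> real) \<Rightarrow> real \<Rightarrow> real" where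
  "nth_deriv r f = (deriv ^^ r) f"

definition centredB :: "nat \<Rightarrow> nat \<Rightarrow> real \<Rightarrow> real \<Rightarrow> real" where
  "centredB p n c x = cardBspline p (real n * x - c + (real p + 1) / 2)"

definition neumannBasis :: "nat \<Rightarrow> nat \<Rightarrow> nat \<Rightarrow> real \<Rightarrow> real" where
  "neumannBasis p n i x =
     (\<Sum>\<^sub>\<infinity>m::int. centredB p n (real i - 1/2 + 2 * real_of_int m * real n) x
                  + centredB p n (- (real i - 1/2) + 2 * real_of_int m * real n) x)"

text \<open>Matrix X^{p,r,1}, entries indexed by i,j in {1..n}.\<close>
definition Xmat :: "nat \<Rightarrow> nat \<Rightarrow> nat \<Rightarrow> nat \<Rightarrow> nat \<Rightarrow> real" where
  "Xmat p r n i j = integral {0..1}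
     (\<lambda>x. nth_deriv r (neumannBasis p n i) x * nth_deriv r (neumannBasis p n j) x)"

text \<open>Toeplitz and Hankel matrices from a sequence alpha (alpha k = 0 for k > p
  is built into alpha itself).\<close>
definition toeplitzM :: "(nat \<Rightarrow> real) \<Rightarrow> nat \<Rightarrow> nat \<Rightarrow> real" where
  "toeplitzM \<alpha> i j = \<alpha> (if i \<le> j then j - i else i - j)"

definition hankelM :: "nat \<Rightarrow> (nat \<Rightarrow> real) \<Rightarrow> nat \<Rightarrow> nat \<Rightarrow> real" where
  "hankelM n \<alpha> i j = \<alpha> (i + j - 1) + \<alpha> (2 * n + 1 - i - j)"

definition alphaSeq :: "nat \<Rightarrow> nat \<Rightarrow> nat \<Rightarrow> real" where
  "alphaSeq p r k = (if k \<le> p then (-1) ^ r *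
      nth_deriv (2 * r) (cardBspline (2 * p + 1)) (real p + 1 - real k) else 0)"

end

theory Submission
  imports Defs
begin

text \<open>On the unit interval the Neumann basis function \<open>N\<^sup>p\<^sub>i\<^sub>,\<^sub>1\<close> is the sum of the three
  B-splines centred (in the scaled variable \<open>n x\<close>) at \<open>a = i - 1/2\<close> and at its mirror images
  \<open>-a\<close> and \<open>2n - a\<close> in the walls \<open>0\<close> and \<open>n\<close>.  The reflections \<open>x \<mapsto> -x\<close> and \<open>x \<mapsto> 2 - x\<close>
  reassemble the nine products of these pieces over \<open>[0,1]\<close> into three integrals over \<open>[-1,2]\<close>
  of a product of two shifted B-spline derivatives.  Each of these is an autocorrelation,
  \<open>\<integral> \<N>\<^sub>p\<^sup>(\<^sup>r\<^sup>)(t) \<N>\<^sub>p\<^sup>(\<^sup>r\<^sup>)(t + d) dt = (-1)\<^sup>r \<N>\<^sub>2\<^sub>p\<^sub>+\<^sub>1\<^sup>(\<^sup>2\<^sup>r\<^sup>)(p + 1 - d)\<close>, by the convolution identity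
  \<open>\<N>\<^sub>p * \<N>\<^sub>p = \<N>\<^sub>2\<^sub>p\<^sub>+\<^sub>1\<close>, and its values at \<open>d = i - j\<close>, \<open>i + j - 1\<close> and \<open>i + j - 1 - 2n\<close> are the
  Toeplitz and Hankel entries.  The factor \<open>n\<^sup>2\<^sup>r\<^sup>-\<^sup>1\<close> comes from the chain rule and the
  substitution \<open>t = n x\<close>.\<close>

section \<open>Closed form of the cardinal B-spline and its derivatives\<close>

definition trunc_power :: "real \<Rightarrow> nat \<Rightarrow> real \<Rightarrow> real" where
  "trunc_power k m t = (if k \<le> t then (t - k) ^ m else 0)"

lemma trunc_power_Suc: "trunc_power k (Suc m) t = (t - k) * trunc_power k m t"
  by (simp add: trunc_power_def)

lemma trunc_power_diff: "trunc_power k m (t - d) = trunc_power (k + d) m t"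
  by (simp add: trunc_power_def algebra_simps)

lemma trunc_power_has_derivative:
  assumes "1 \<le> m \<or> t \<noteq> k"
  shows "(trunc_power k (Suc m) has_real_derivative (real (Suc m) * trunc_power k m t)) (at t)"
proof -
  consider "k < t" | "t < k" | "t = k" "1 \<le> m" using assms by linarith
  then show ?thesis
  proof cases
    case 1
    have "((\<lambda>t. t - k) has_real_derivative 1) (at t)" by (auto intro!: derivative_eq_intros)
    from DERIV_power[OF this, of "Suc m"]
    have d: "((\<lambda>t. (t - k) ^ Suc m) has_real_derivative (real (Suc m) * (t - k) ^ m)) (at t)"
      by simp
    show ?thesis
      by (rule has_field_derivative_transform_within_open[where S = "{k<..}"])
         (use d 1 in \<open>auto simp: trunc_power_def\<close>)
  next
    case 2
    show ?thesis
      by (rule has_field_derivative_transform_within_open[where S = "{..<k}" and f = "\<lambda>_. 0"])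
         (use 2 in \<open>auto simp: trunc_power_def\<close>)
  next
    case 3
    have "((\<lambda>h. (max h 0) ^ m) \<longlongrightarrow> (max 0 0) ^ m) (at (0::real))"
      by (intro tendsto_intros)
    moreover have "\<forall>\<^sub>F h in at (0::real).
        (max h 0) ^ m = (trunc_power k (Suc m) (k + h) - trunc_power k (Suc m) k) / h"
      unfolding eventually_at_filter using 3 by (auto simp: trunc_power_def max_def power_0_left)
    ultimately show ?thesis
      using 3 by (simp add: DERIV_def trunc_power_def power_0_left tendsto_cong)
  qed
qed

text \<open>The r-th derivative of \<open>\<N>\<^sub>p\<close> (for \<open>r = p\<close>: away from the knots), in closed form.\<close>
definition bspline_deriv :: "nat \<Rightarrow> nat \<Rightarrow> real \<Rightarrow> real" where
  "bspline_deriv p r t =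
     (\<Sum>k\<le>Suc p. (-1) ^ k * real (Suc p choose k) * trunc_power (real k) (p - r) t) / fact (p - r)"

definition bspline_knots :: "nat \<Rightarrow> real set" where
  "bspline_knots p = real ` {..Suc p}"

lemma finite_bspline_knots [simp]: "finite (bspline_knots p)"
  by (simp add: bspline_knots_def)

lemma bspline_sum_recurrence:
  "(\<Sum>k\<le>Suc (Suc p). (-1) ^ k * real (Suc (Suc p) choose k) * trunc_power (real k) (Suc p) t)
   = t * (\<Sum>k\<le>Suc p. (-1) ^ k * real (Suc p choose k) * trunc_power (real k) p t)
     + (real p + 2 - t) * (\<Sum>k\<le>Suc p. (-1) ^ k * real (Suc p choose k) * trunc_power (real k + 1) p t)"
proof -
  define c where "c k = (case k of 0 \<Rightarrow> 0 | Suc j \<Rightarrow> real (Suc p choose j))" for k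
  have pascal: "real (Suc (Suc p) choose k) * (t - real k) =
     t * real (Suc p choose k) - (real p + 2 - t) * c k" for k
  proof (cases k)
    case (Suc j)
    have "real (Suc j) * real (Suc (Suc p) choose Suc j) = real (Suc (Suc p)) * real (Suc p choose j)"
      using Suc_times_binomial[of j "Suc p"] by (metis of_nat_mult)
    then show ?thesis using Suc by (simp add: c_def algebra_simps)
  qed (simp add: c_def)
  have "(\<Sum>k\<le>Suc (Suc p). (-1) ^ k * real (Suc (Suc p) choose k) * trunc_power (real k) (Suc p) t)
     = (\<Sum>k\<le>Suc (Suc p). (-1) ^ k * (t * real (Suc p choose k) - (real p + 2 - t) * c k) * trunc_power (real k) p t)"
    by (intro sum.cong refl) (simp add: trunc_power_Suc pascal[symmetric] mult.assoc[symmetric])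
  also have "\<dots> = t * (\<Sum>k\<le>Suc (Suc p). (-1) ^ k * real (Suc p choose k) * trunc_power (real k) p t)
      - (real p + 2 - t) * (\<Sum>k\<le>Suc (Suc p). (-1) ^ k * c k * trunc_power (real k) p t)"
    by (simp only: sum_distrib_left sum_subtractf[symmetric]) (intro sum.cong refl, simp add: algebra_simps)
  also have "(\<Sum>k\<le>Suc (Suc p). (-1) ^ k * real (Suc p choose k) * trunc_power (real k) p t)
      = (\<Sum>k\<le>Suc p. (-1) ^ k * real (Suc p choose k) * trunc_power (real k) p t)"
    by (simp add: binomial_eq_0)
  also have "(\<Sum>k\<le>Suc (Suc p). (-1) ^ k * c k * trunc_power (real k) p t)
      = - (\<Sum>k\<le>Suc p. (-1) ^ k * real (Suc p choose k) * trunc_power (real k + 1) p t)"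
    by (subst sum.atMost_Suc_shift) (simp add: c_def sum_negf algebra_simps)
  finally show ?thesis by (simp only: mult_minus_right diff_minus_eq_add)
qed

lemma cardBspline_eq_bspline_deriv: "cardBspline p = bspline_deriv p 0"
proof
  fix t show "cardBspline p t = bspline_deriv p 0 t"
  proof (induction p arbitrary: t)
    case 0
    show ?case by (simp add: bspline_deriv_def trunc_power_def)
  next
    case (Suc p)
    define S1 where "S1 = (\<Sum>k\<le>Suc p. (-1) ^ k * real (Suc p choose k) * trunc_power (real k) p t)"
    define S2 where "S2 = (\<Sum>k\<le>Suc p. (-1) ^ k * real (Suc p choose k) * trunc_power (real k + 1) p t)"
    have S1: "bspline_deriv p 0 t = S1 / fact p"
      and S2: "bspline_deriv p 0 (t - 1) = S2 / fact p"
      by (simp_all add: bspline_deriv_def S1_def S2_def trunc_power_diff)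
    have "bspline_deriv (Suc p) 0 t = (t * S1 + (real p + 2 - t) * S2) / fact (Suc p)"
      unfolding bspline_deriv_def S1_def S2_def by (simp only: diff_zero bspline_sum_recurrence)
    also have "\<dots> = t / real (Suc p) * (S1 / fact p) + (real (Suc p) + 1 - t) / real (Suc p) * (S2 / fact p)"
      by (simp add: field_simps) (simp add: add_divide_distrib[symmetric] algebra_simps)
    finally show ?case by (simp add: Suc.IH S1[symmetric] S2[symmetric])
  qed
qed

lemma bspline_deriv_has_derivative:
  assumes "Suc r < p \<or> (Suc r = p \<and> t \<notin> bspline_knots p)"
  shows "(bspline_deriv p r has_real_derivative bspline_deriv p (Suc r) t) (at t)"
proof -
  define q where "q = p - Suc r"
  have q: "p - r = Suc q" using assms by (auto simp: q_def)
  have "((\<lambda>t. \<Sum>k\<le>Suc p. (-1) ^ k * real (Suc p choose k) * trunc_power (real k) (Suc q) t)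
     has_real_derivative
      (\<Sum>k\<le>Suc p. (-1) ^ k * real (Suc p choose k) * (real (Suc q) * trunc_power (real k) q t))) (at t)"
  proof (intro DERIV_sum DERIV_cmult trunc_power_has_derivative)
    fix k assume "k \<in> {..Suc p}"
    then show "1 \<le> q \<or> t \<noteq> real k" using assms by (auto simp: q_def bspline_knots_def)
  qed
  then have "((\<lambda>t. \<Sum>k\<le>Suc p. (-1) ^ k * real (Suc p choose k) * trunc_power (real k) (Suc q) t)
     has_real_derivative real (Suc q) *
       (\<Sum>k\<le>Suc p. (-1) ^ k * real (Suc p choose k) * trunc_power (real k) q t)) (at t)"
    by (simp add: sum_distrib_left algebra_simps)
  from DERIV_cdivide[OF this, of "fact (Suc q)"] show ?thesis
    unfolding bspline_deriv_def q by (simp add: q_def fact_Suc del: of_nat_Suc)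
qed

lemma cardBspline_eq_0: "t < 0 \<or> real p + 1 \<le> t \<Longrightarrow> cardBspline p t = 0"
  by (induction p arbitrary: t) auto

lemma cardBspline_reflect: "1 \<le> p \<Longrightarrow> cardBspline p (real p + 1 - t) = cardBspline p t"
proof (induction p arbitrary: t rule: nat_induct_at_least)
  case base
  show ?case by (auto simp: field_simps)
next
  case (Suc p)
  have "cardBspline p (real p + 2 - t) = cardBspline p (t - 1)"
    using Suc.IH[of "t - 1"] by (simp add: algebra_simps)
  with Suc.IH[of t] show ?case by (simp add: algebra_simps)
qed

lemma bspline_knots_reflect: "s \<in> bspline_knots p \<Longrightarrow> real p + 1 - s \<in> bspline_knots p"
proof -
  assume "s \<in> bspline_knots p"
  then obtain k where "k \<le> Suc p" "s = real k" by (auto simp: bspline_knots_def)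
  then have "real p + 1 - s = real (Suc p - k)" by (simp add: of_nat_diff)
  then show ?thesis by (simp add: bspline_knots_def)
qed

text \<open>Both sides have the same derivative off the knots, so the identity propagates from
  \<open>r\<close> to \<open>r + 1\<close>.\<close>
lemma bspline_deriv_reflect:
  assumes "r \<le> p" "1 \<le> p" "s \<notin> bspline_knots p"
  shows "bspline_deriv p r (real p + 1 - s) = (-1) ^ r * bspline_deriv p r s"
  using assms(1,3)
proof (induction r arbitrary: s)
  case 0
  then show ?case using cardBspline_reflect[OF assms(2)] by (simp add: cardBspline_eq_bspline_deriv)
next
  case (Suc r)
  have derivable: "Suc r < p \<or> (Suc r = p \<and> u \<notin> bspline_knots p)" if "u \<notin> bspline_knots p" for u
    using Suc.prems that by auto
  have s': "real p + 1 - s \<notin> bspline_knots p"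
    using bspline_knots_reflect[of "real p + 1 - s" p] Suc.prems by auto
  have "((\<lambda>u. real p + 1 - u) has_real_derivative -1) (at s)"
    by (auto intro!: derivative_eq_intros)
  from DERIV_chain2[OF bspline_deriv_has_derivative[OF derivable[OF s']] this]
  have "((\<lambda>u. bspline_deriv p r (real p + 1 - u)) has_real_derivative
      - bspline_deriv p (Suc r) (real p + 1 - s)) (at s)"
    by simp
  then have "((\<lambda>u. (-1) ^ r * bspline_deriv p r u) has_real_derivative
      - bspline_deriv p (Suc r) (real p + 1 - s)) (at s)"
    by (rule has_field_derivative_transform_within_open[where S = "- bspline_knots p"])
       (use Suc in \<open>auto simp: finite_imp_closed open_Compl\<close>)
  moreover have "((\<lambda>u. (-1) ^ r * bspline_deriv p r u) has_real_derivative
      (-1) ^ r * bspline_deriv p (Suc r) s) (at s)"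
    using bspline_deriv_has_derivative[OF derivable[OF Suc.prems(2)]] by (rule DERIV_cmult)
  ultimately show ?case by (auto dest: DERIV_unique)
qed

lemma bspline_deriv_eq_0_left: "t < 0 \<or> (t \<le> 0 \<and> r < p) \<Longrightarrow> bspline_deriv p r t = 0"
  unfolding bspline_deriv_def by (rule divide_eq_0_iff[THEN iffD2], rule disjI1, rule sum.neutral)
    (auto simp: trunc_power_def power_0_left)

lemma bspline_deriv_eq_0_right:
  assumes "r \<le> p" "1 \<le> p" "real p + 1 < t"
  shows "bspline_deriv p r t = 0"
proof -
  have "real p + 1 - t \<notin> bspline_knots p" using assms(3) by (auto simp: bspline_knots_def)
  with assms show ?thesis
    using bspline_deriv_reflect[of r p "real p + 1 - t"] bspline_deriv_eq_0_left[of "real p + 1 - t"]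
    by simp
qed

lemma funpow_deriv_eq:
  fixes f :: "nat \<Rightarrow> real \<Rightarrow> real"
  assumes "\<And>k x. Suc k < m \<Longrightarrow> (f k has_real_derivative f (Suc k) x) (at x)"
  shows "k < m \<Longrightarrow> (deriv ^^ k) (f 0) = f k"
proof (induction k)
  case (Suc k)
  then show ?case using assms by (auto intro!: DERIV_imp_deriv)
qed simp

lemma funpow_deriv_eq_last:
  fixes f :: "nat \<Rightarrow> real \<Rightarrow> real"
  assumes "\<And>k x. Suc k < Suc m \<Longrightarrow> (f k has_real_derivative f (Suc k) x) (at x)"
    and "(f m has_real_derivative f (Suc m) x) (at x)"
  shows "(deriv ^^ Suc m) (f 0) x = f (Suc m) x"
  using funpow_deriv_eq[where m = "Suc m" and f = f, OF assms(1), of m] assms(2) by (simp add: DERIV_imp_deriv)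

lemma nth_deriv_cardBspline: "r < p \<Longrightarrow> nth_deriv r (cardBspline p) = bspline_deriv p r"
  unfolding nth_deriv_def cardBspline_eq_bspline_deriv
  by (rule funpow_deriv_eq[of p "bspline_deriv p"]) (auto intro: bspline_deriv_has_derivative)

section \<open>The convolution identity\<close>

lemma vandermonde_double_sum:
  fixes g :: "nat \<Rightarrow> real"
  shows "(\<Sum>k\<le>m. \<Sum>l\<le>m. real (m choose k) * real (m choose l) * g (k + l))
       = (\<Sum>c\<le>m + m. real ((m + m) choose c) * g c)"
proof -
  define F where "F i j = real (m choose i) * real (m choose j) * g (i + j)" for i j
  have fin: "finite {(i::nat, j::nat). i + j \<le> m + m}"
    by (rule finite_subset[of _ "{..m+m} \<times> {..m+m}"]) auto
  have "(\<Sum>k\<le>m. \<Sum>l\<le>m. F k l) = (\<Sum>(i,j)\<in>{..m} \<times> {..m}. F i j)"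
    by (simp add: sum.cartesian_product)
  also have "\<dots> = (\<Sum>(i,j)\<in>{(i,j). i + j \<le> m + m}. F i j)"
    by (rule sum.mono_neutral_left[OF fin]) (auto simp: F_def binomial_eq_0)
  also have "\<dots> = (\<Sum>c\<le>m + m. \<Sum>i\<le>c. F i (c - i))"
    by (rule sum.triangle_reindex_eq)
  also have "\<dots> = (\<Sum>c\<le>m + m. real ((m + m) choose c) * g c)"
  proof (intro sum.cong refl)
    fix c
    have "(\<Sum>i\<le>c. F i (c - i)) = (\<Sum>i\<le>c. real (m choose i) * real (m choose (c - i))) * g c"
      by (auto simp: F_def sum_distrib_right intro!: sum.cong)
    also have "(\<Sum>i\<le>c. real (m choose i) * real (m choose (c - i))) = real ((m + m) choose c)"
      by (simp only: of_nat_mult[symmetric] of_nat_sum[symmetric] vandermonde)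
    finally show "(\<Sum>i\<le>c. F i (c - i)) = real ((m + m) choose c) * g c" .
  qed
  finally show ?thesis by (simp add: F_def)
qed

lemma has_integral_power_mult_power:
  fixes k M :: real
  assumes "k \<le> M"
  shows "((\<lambda>t. (t - k) ^ i * (M - t) ^ j) has_integral
           (fact i * fact j / fact (i + j + 1) * (M - k) ^ (i + j + 1))) {k..M}"
proof (cases "k = M")
  case False
  then have kM: "k < M" using assms by simp
  have "Gamma (real m + 1) = fact m" for m
    using Gamma_fact[of m] by (simp add: add.commute)
  from this[of i] this[of j] this[of "i + j + 1"]
  have "Beta (real i + 1) (real j + 1) = fact i * fact j / fact (i + j + 1)"
    by (simp add: Beta_def add_ac)
  then have "((\<lambda>s. s powr (real i + 1 - 1) * (1 - s) powr (real j + 1 - 1)) has_integral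
      (fact i * fact j / fact (i + j + 1))) {0..1}"
    using has_integral_Beta_real[of "real i + 1" "real j + 1"] by simp
  then have unit: "((\<lambda>s::real. s ^ i * (1 - s) ^ j) has_integral (fact i * fact j / fact (i + j + 1))) {0..1}"
    by (rule has_integral_spike_finite[of "{0, 1}", rotated 2]) (auto simp: powr_realpow)
  define m where "m = 1 / (M - k)"
  define c where "c = - k / (M - k)"
  have "m > 0" using kM by (simp add: m_def)
  moreover have "(0 - c) /\<^sub>R m = k" "(1 - c) /\<^sub>R m = M"
    using kM by (auto simp: m_def c_def field_simps)
  ultimately have "((\<lambda>x. (m * x + c) ^ i * (1 - (m * x + c)) ^ j) has_integral
      (fact i * fact j / fact (i + j + 1)) * (M - k)) {k..M}"
    using has_integral_affinity'[OF unit[folded box_real(2)], of m c] by (simp add: m_def mult_ac)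
  from has_integral_mult_right[OF this, of "(M - k) ^ (i + j)"]
  have "((\<lambda>x. (M - k) ^ (i + j) * ((m * x + c) ^ i * (1 - (m * x + c)) ^ j)) has_integral
      fact i * fact j / fact (i + j + 1) * (M - k) ^ (i + j + 1)) {k..M}"
    by (simp add: algebra_simps)
  moreover have "(M - k) ^ (i + j) * ((m * x + c) ^ i * (1 - (m * x + c)) ^ j) = (x - k) ^ i * (M - x) ^ j"
    for x
  proof -
    have affine: "m * x + c = (x - k) / (M - k)"
      by (simp add: m_def c_def diff_divide_distrib)
    moreover have "1 - (m * x + c) = (M - x) / (M - k)"
      unfolding affine using kM by (simp add: field_simps)
    ultimately show ?thesis using kM by (simp add: power_divide power_add)
  qed
  ultimately show ?thesis by simp
qed (simp add: has_integral_refl)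

lemma has_integral_trunc_power_product:
  fixes k M A B :: real
  assumes "A \<le> k" "M \<le> B"
  shows "((\<lambda>t. trunc_power k i t * trunc_power (- M) j (- t)) has_integral
           (fact i * fact j / fact (i + j + 1) * trunc_power k (i + j + 1) M)) {A..B}"
proof (cases "k \<le> M")
  case True
  have "((\<lambda>t. trunc_power k i t * trunc_power (- M) j (- t)) has_integral
      (fact i * fact j / fact (i + j + 1) * (M - k) ^ (i + j + 1))) {k..M}"
    by (rule has_integral_spike_finite[OF finite.emptyI _ has_integral_power_mult_power[OF True]])
       (auto simp: trunc_power_def)
  then have "((\<lambda>t. trunc_power k i t * trunc_power (- M) j (- t)) has_integral
      (fact i * fact j / fact (i + j + 1) * (M - k) ^ (i + j + 1))) {A..B}"
    by (rule has_integral_on_superset) (use assms in \<open>auto simp: trunc_power_def\<close>)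
  then show ?thesis using True by (simp add: trunc_power_def)
next
  case False
  then have "(\<lambda>t. trunc_power k i t * trunc_power (- M) j (- t)) = (\<lambda>_. 0)"
    by (auto simp: trunc_power_def)
  moreover have "trunc_power k (i + j + 1) M = 0"
    using False by (simp add: trunc_power_def)
  ultimately show ?thesis by simp
qed

text \<open>Both sides are expanded into truncated powers; each product of two of them
  integrates to a Beta integral, and Vandermonde's identity recombines the coefficients.\<close>
lemma has_integral_bspline_deriv_convolution:
  assumes "r \<le> p" "A \<le> 0" "c \<le> B"
  shows "((\<lambda>t. bspline_deriv p r t * bspline_deriv p r (c - t)) has_integral
           bspline_deriv (2 * p + 1) (2 * r) c) {A..B}"
proof -
  define q where "q = p - r"
  define a where "a k = (-1) ^ k * real (Suc p choose k)" for k :: nat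
  define \<beta> where "\<beta> = fact q * fact q / (fact (q + q + 1) :: real)"
  have q: "2 * p + 1 - 2 * r = q + q + 1" using assms(1) by (simp add: q_def)
  have integrand: "bspline_deriv p r t * bspline_deriv p r (c - t) =
    (\<Sum>k\<le>Suc p. \<Sum>l\<le>Suc p. (a k * a l) * (trunc_power (real k) q t * trunc_power (- (c - real l)) q (- t)))
      / (fact q * fact q)" for t
  proof -
    have "trunc_power (real l) q (c - t) = trunc_power (- (c - real l)) q (- t)" for l
      by (simp add: trunc_power_def algebra_simps)
    then show ?thesis
      by (simp add: bspline_deriv_def a_def q_def sum_product mult_ac del: sum.atMost_Suc)
  qed
  have int: "((\<lambda>t. \<Sum>k\<le>Suc p. \<Sum>l\<le>Suc p. (a k * a l) *
            (trunc_power (real k) q t * trunc_power (- (c - real l)) q (- t))) has_integral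
     (\<Sum>k\<le>Suc p. \<Sum>l\<le>Suc p. (a k * a l) * (\<beta> * trunc_power (real k) (q + q + 1) (c - real l)))) {A..B}"
    unfolding \<beta>_def
    by (intro has_integral_sum finite_atMost has_integral_mult_right has_integral_trunc_power_product)
       (use assms in auto)
  define g where "g j = (-1) ^ j * trunc_power (real j) (q + q + 1) c" for j
  have "(a k * a l) * (\<beta> * trunc_power (real k) (q + q + 1) (c - real l))
      = \<beta> * (real (Suc p choose k) * real (Suc p choose l) * g (k + l))" for k l
    by (simp add: a_def g_def trunc_power_diff power_add)
  then have "(\<Sum>k\<le>Suc p. \<Sum>l\<le>Suc p. (a k * a l) * (\<beta> * trunc_power (real k) (q + q + 1) (c - real l)))
      = \<beta> * (\<Sum>j\<le>Suc p + Suc p. real ((Suc p + Suc p) choose j) * g j)"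
    by (simp only: sum_distrib_left vandermonde_double_sum[symmetric])
  moreover have "\<beta> * (\<Sum>j\<le>Suc p + Suc p. real ((Suc p + Suc p) choose j) * g j) / (fact q * fact q)
      = bspline_deriv (2 * p + 1) (2 * r) c"
  proof -
    have "Suc (2 * p + 1) = Suc p + Suc p" by simp
    then show ?thesis
      unfolding bspline_deriv_def q \<beta>_def g_def by (simp only: mult_ac) simp
  qed
  ultimately show ?thesis
    unfolding integrand using has_integral_divide[OF int, of "fact q * fact q"] by simp
qed

definition bspline_autocorr :: "nat \<Rightarrow> nat \<Rightarrow> real \<Rightarrow> real" where
  "bspline_autocorr p r d = (-1) ^ r * bspline_deriv (2 * p + 1) (2 * r) (real p + 1 - d)"

text \<open>Agrees with \<^const>\<open>bspline_deriv\<close> off the knots, but unlike it satisfies the reflection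
  identity everywhere, so that reflections of integrands hold pointwise.\<close>
definition sym_bspline_deriv :: "nat \<Rightarrow> nat \<Rightarrow> real \<Rightarrow> real" where
  "sym_bspline_deriv p r s = (bspline_deriv p r s + (-1) ^ r * bspline_deriv p r (real p + 1 - s)) / 2"

lemma neg_one_power_square: "(-1::real) ^ r * (-1) ^ r = 1"
  by (simp add: power_mult_distrib[symmetric])

lemma sym_bspline_deriv_reflect:
  "sym_bspline_deriv p r (real p + 1 - s) = (-1) ^ r * sym_bspline_deriv p r s"
  unfolding sym_bspline_deriv_def using neg_one_power_square[of r] by (simp add: algebra_simps)

lemma sym_bspline_deriv_eq:
  "r \<le> p \<Longrightarrow> 1 \<le> p \<Longrightarrow> s \<notin> bspline_knots p \<Longrightarrow> sym_bspline_deriv p r s = bspline_deriv p r s"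
  unfolding sym_bspline_deriv_def using bspline_deriv_reflect neg_one_power_square[of r]
  by (simp add: algebra_simps)

lemma sym_bspline_deriv_eq_0:
  "r \<le> p \<Longrightarrow> 1 \<le> p \<Longrightarrow> s < 0 \<or> real p + 1 < s \<Longrightarrow> sym_bspline_deriv p r s = 0"
  unfolding sym_bspline_deriv_def using bspline_deriv_eq_0_left bspline_deriv_eq_0_right by auto

lemma has_integral_sym_bspline_deriv_correlation:
  assumes "r \<le> p" "1 \<le> p" "A \<le> 0" "real p + 1 \<le> B"
  shows "((\<lambda>t. sym_bspline_deriv p r t * sym_bspline_deriv p r (t + d)) has_integral
           bspline_autocorr p r d) {A..B}"
proof -
  define c where "c = real p + 1 - d"
  define B' where "B' = max (real p + 1) c"
  define g where "g t = sym_bspline_deriv p r t * sym_bspline_deriv p r (t + d)" for t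
  have conv: "((\<lambda>t. (-1) ^ r * (bspline_deriv p r t * bspline_deriv p r (c - t))) has_integral
      bspline_autocorr p r d) {0..B'}"
    unfolding bspline_autocorr_def c_def[symmetric]
    by (intro has_integral_mult_right has_integral_bspline_deriv_convolution) (use assms in \<open>auto simp: B'_def\<close>)
  have "(g has_integral bspline_autocorr p r d) {0..B'}"
  proof (rule has_integral_spike_finite[where S = "bspline_knots p \<union> (\<lambda>z. c - z) ` bspline_knots p",
        OF _ _ conv])
    fix t assume "t \<in> {0..B'} - (bspline_knots p \<union> (\<lambda>z. c - z) ` bspline_knots p)"
    then have t: "t \<notin> bspline_knots p" "c - t \<notin> bspline_knots p"
      using rev_image_eqI[of "c - t" "bspline_knots p" t "\<lambda>z. c - z"] by auto
    have "sym_bspline_deriv p r (t + d) = (-1) ^ r * bspline_deriv p r (c - t)"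
      using sym_bspline_deriv_reflect[of p r "c - t"] sym_bspline_deriv_eq[OF assms(1,2) t(2)]
      by (simp add: c_def algebra_simps)
    then show "g t = (-1) ^ r * (bspline_deriv p r t * bspline_deriv p r (c - t))"
      using sym_bspline_deriv_eq[OF assms(1,2) t(1)] by (simp add: g_def)
  qed simp
  moreover have vanish: "g t = 0" if "t \<notin> {0..real p + 1}" for t
    using sym_bspline_deriv_eq_0[OF assms(1,2), of t] that by (auto simp: g_def)
  moreover have "(\<lambda>t. if t \<in> {0..real p + 1} then g t else 0) = g"
    using vanish by auto
  moreover have "{0..real p + 1} \<subseteq> {0..B'}" by (auto simp: B'_def)
  ultimately have "(g has_integral bspline_autocorr p r d) {0..real p + 1}"
    using has_integral_restrict[of "{0..real p + 1}" "{0..B'}" g] by simp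
  then show ?thesis
    unfolding g_def[symmetric] by (rule has_integral_on_superset) (use assms vanish in auto)
qed

lemma bspline_autocorr_minus: "r \<le> p \<Longrightarrow> 1 \<le> p \<Longrightarrow> bspline_autocorr p r (- d) = bspline_autocorr p r d"
proof -
  assume rp: "r \<le> p" and p: "1 \<le> p"
  define A where "A = - \<bar>d\<bar>"
  define B where "B = real p + 1 + \<bar>d\<bar>"
  have "((\<lambda>t. sym_bspline_deriv p r t * sym_bspline_deriv p r (t + - d)) has_integral
      bspline_autocorr p r (- d)) {A..B}"
    by (rule has_integral_sym_bspline_deriv_correlation[OF rp p]) (auto simp: A_def B_def)
  from has_integral_shift_real_ivl[OF this, of d]
  have "((\<lambda>t. sym_bspline_deriv p r t * sym_bspline_deriv p r (t + d)) has_integral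
      bspline_autocorr p r (- d)) {A - d..B - d}"
    by (simp add: mult.commute)
  moreover have "((\<lambda>t. sym_bspline_deriv p r t * sym_bspline_deriv p r (t + d)) has_integral
      bspline_autocorr p r d) {A - d..B - d}"
    by (rule has_integral_sym_bspline_deriv_correlation[OF rp p]) (auto simp: A_def B_def)
  ultimately show ?thesis by (rule has_integral_unique)
qed

section \<open>Scaled and centred B-splines\<close>

definition centredB_deriv :: "nat \<Rightarrow> nat \<Rightarrow> nat \<Rightarrow> real \<Rightarrow> real \<Rightarrow> real" where
  "centredB_deriv p r n c x = real n ^ r * bspline_deriv p r (real n * x - c + (real p + 1) / 2)"

definition sym_centredB_deriv :: "nat \<Rightarrow> nat \<Rightarrow> nat \<Rightarrow> real \<Rightarrow> real \<Rightarrow> real" where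
  "sym_centredB_deriv p r n c x = real n ^ r * sym_bspline_deriv p r (real n * x - c + (real p + 1) / 2)"

definition centredB_knots :: "nat \<Rightarrow> nat \<Rightarrow> real \<Rightarrow> real set" where
  "centredB_knots p n c = (\<lambda>z. (z + c - (real p + 1) / 2) / real n) ` bspline_knots p"

lemma finite_centredB_knots [simp]: "finite (centredB_knots p n c)"
  by (simp add: centredB_knots_def)

lemma centredB_knots_not_in:
  assumes "0 < n" "x \<notin> centredB_knots p n c"
  shows "real n * x - c + (real p + 1) / 2 \<notin> bspline_knots p"
proof
  assume "real n * x - c + (real p + 1) / 2 \<in> bspline_knots p"
  then have "(real n * x - c + (real p + 1) / 2 + c - (real p + 1) / 2) / real n \<in> centredB_knots p n c"
    unfolding centredB_knots_def by blast
  with assms show False by simp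
qed

lemma centredB_eq_centredB_deriv: "centredB p n = centredB_deriv p 0 n"
  by (simp add: fun_eq_iff centredB_def centredB_deriv_def cardBspline_eq_bspline_deriv)

lemma centredB_deriv_has_derivative:
  assumes "0 < n" "Suc r < p \<or> (Suc r = p \<and> x \<notin> centredB_knots p n c)"
  shows "(centredB_deriv p r n c has_real_derivative centredB_deriv p (Suc r) n c x) (at x)"
proof -
  have "Suc r < p \<or> (Suc r = p \<and> real n * x - c + (real p + 1) / 2 \<notin> bspline_knots p)"
    using assms centredB_knots_not_in[OF assms(1)] by blast
  moreover have "((\<lambda>x. real n * x - c + (real p + 1) / 2) has_real_derivative real n) (at x)"
    by (auto intro!: derivative_eq_intros)
  ultimately have "((\<lambda>x. bspline_deriv p r (real n * x - c + (real p + 1) / 2)) has_real_derivative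
      bspline_deriv p (Suc r) (real n * x - c + (real p + 1) / 2) * real n) (at x)"
    by (rule DERIV_chain2[OF bspline_deriv_has_derivative])
  from DERIV_cmult[OF this, of "real n ^ r"] show ?thesis
    unfolding centredB_deriv_def by (simp add: mult_ac)
qed

lemma sym_centredB_deriv_eq:
  "0 < n \<Longrightarrow> r \<le> p \<Longrightarrow> 1 \<le> p \<Longrightarrow> x \<notin> centredB_knots p n c \<Longrightarrow>
    sym_centredB_deriv p r n c x = centredB_deriv p r n c x"
  unfolding sym_centredB_deriv_def centredB_deriv_def
  using sym_bspline_deriv_eq centredB_knots_not_in by simp

lemma sym_centredB_deriv_product_reflect:
  "sym_centredB_deriv p r n u (z - x) * sym_centredB_deriv p r n v (z - x) =
   sym_centredB_deriv p r n (real n * z - u) x * sym_centredB_deriv p r n (real n * z - v) x"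
proof -
  have reflect: "sym_centredB_deriv p r n c (z - x) = (-1) ^ r * sym_centredB_deriv p r n (real n * z - c) x" for c
  proof -
    have "real n * (z - x) - c + (real p + 1) / 2 = real p + 1 - (real n * x - (real n * z - c) + (real p + 1) / 2)"
      by (simp add: field_simps)
    then show ?thesis unfolding sym_centredB_deriv_def by (simp only: sym_bspline_deriv_reflect mult_ac)
  qed
  show ?thesis
    unfolding reflect[of u] reflect[of v] using neg_one_power_square[of r] by (simp add: mult_ac)
qed

lemma sym_centredB_deriv_eq_0:
  "r \<le> p \<Longrightarrow> 1 \<le> p \<Longrightarrow> real n * x + (real p + 1) / 2 < c \<or> c + (real p + 1) / 2 < real n * x \<Longrightarrow>
    sym_centredB_deriv p r n c x = 0"
  unfolding sym_centredB_deriv_def using sym_bspline_deriv_eq_0 by (auto simp: field_simps)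

lemma sym_centredB_deriv_product_eq_0:
  assumes "r \<le> p" "1 \<le> p" "u + (real p + 1) < v \<or> v + (real p + 1) < u"
  shows "sym_centredB_deriv p r n u x * sym_centredB_deriv p r n v x = 0"
proof -
  have "real n * x + (real p + 1) / 2 < u \<or> u + (real p + 1) / 2 < real n * x \<or>
        real n * x + (real p + 1) / 2 < v \<or> v + (real p + 1) / 2 < real n * x"
    using assms(3) by argo
  then show ?thesis
    using sym_centredB_deriv_eq_0[OF assms(1,2), of n x u] sym_centredB_deriv_eq_0[OF assms(1,2), of n x v]
    by auto
qed

lemma has_integral_sym_centredB_deriv_product:
  assumes "r \<le> p" "1 \<le> p" "0 < n"
    and "real n * X0 + (real p + 1) / 2 \<le> c" "c + (real p + 1) / 2 \<le> real n * X1"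
  shows "((\<lambda>x. sym_centredB_deriv p r n c x * sym_centredB_deriv p r n v x) has_integral
           (real n ^ (2 * r) / real n * bspline_autocorr p r (c - v))) {X0..X1}"
proof -
  define h where "h = (real p + 1) / 2"
  have "((\<lambda>t. sym_bspline_deriv p r t * sym_bspline_deriv p r (t + (c - v))) has_integral
      bspline_autocorr p r (c - v)) {real n * X0 - c + h .. real n * X1 - c + h}"
    by (rule has_integral_sym_bspline_deriv_correlation[OF assms(1,2)])
       (use assms(4,5) in \<open>simp_all add: h_def field_simps\<close>)
  from has_integral_affinity'[OF this[folded box_real(2)], of "real n" "- c + h"]
  have "((\<lambda>x. sym_bspline_deriv p r (real n * x - c + h) * sym_bspline_deriv p r (real n * x - v + h))
      has_integral bspline_autocorr p r (c - v) / real n) {X0..X1}"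
    using assms(3) by (simp add: divide_inverse algebra_simps)
  from has_integral_mult_right[OF this, of "real n ^ r * real n ^ r"]
  have "((\<lambda>x. real n ^ r * sym_bspline_deriv p r (real n * x - c + h) *
      (real n ^ r * sym_bspline_deriv p r (real n * x - v + h))) has_integral
      real n ^ r * real n ^ r * bspline_autocorr p r (c - v) / real n) {X0..X1}"
    by (simp add: mult_ac)
  moreover have "real n ^ (2 * r) = real n ^ r * real n ^ r"
    by (simp add: mult_2 power_add)
  ultimately show ?thesis
    unfolding sym_centredB_deriv_def h_def by simp
qed

lemma sym_centredB_deriv_product_integrable:
  assumes "r \<le> p" "1 \<le> p" "0 < n"
  shows "(\<lambda>x. sym_centredB_deriv p r n c x * sym_centredB_deriv p r n v x) integrable_on {X0..X1}"
proof -
  define h where "h = (real p + 1) / 2"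
  define Y0 where "Y0 = min X0 ((c - h) / real n)"
  define Y1 where "Y1 = max X1 ((c + h) / real n)"
  have "real n * Y0 + h \<le> c" "c + h \<le> real n * Y1"
    using assms(3) by (auto simp: Y0_def Y1_def field_simps min_def max_def)
  then have "(\<lambda>x. sym_centredB_deriv p r n c x * sym_centredB_deriv p r n v x) integrable_on {Y0..Y1}"
    using has_integral_sym_centredB_deriv_product[OF assms, of Y0 c Y1 v]
    by (auto simp: h_def intro: has_integral_integrable)
  then show ?thesis
    by (rule integrable_subinterval_real) (auto simp: Y0_def Y1_def)
qed

section \<open>Folding back to the unit interval\<close>

lemma integral_split_reflect:
  fixes f :: "real \<Rightarrow> real"
  assumes "f integrable_on {-1..2}"
  shows "integral {-1..2} f
    = integral {0..1} (\<lambda>x. f (- x)) + integral {0..1} f + integral {0..1} (\<lambda>x. f (2 - x))"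
proof -
  have "integral {-1..2} f = integral {-1..0} f + integral {0..2} f"
    using Henstock_Kurzweil_Integration.integral_combine[where a = "-1" and c = 0 and b = 2 and f = f] assms by simp
  moreover have "integral {0..2} f = integral {0..1} f + integral {1..2} f"
    using Henstock_Kurzweil_Integration.integral_combine[where a = 0 and c = 1 and b = 2 and f = f]
      integrable_subinterval_real[OF assms, of 0 2] by simp
  moreover have "integral {-1..0} f = integral {0..1} (\<lambda>x. f (- x))"
    using Henstock_Kurzweil_Integration.integral_reflect_real[where a = "-1" and b = 0 and f = f] by simp
  moreover have "integral {1..2} f = integral {0..1} (\<lambda>x. f (2 - x))"
    using integral_shift_real_ivl[where a = 1 and b = 2 and c = 2 and f = f]
      Henstock_Kurzweil_Integration.integral_reflect_real[where a = "-1" and b = 0 and f = "\<lambda>y. f (y + 2)"]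
    by simp
  ultimately show ?thesis by simp
qed

definition mirror_sum :: "nat \<Rightarrow> (real \<Rightarrow> real \<Rightarrow> real) \<Rightarrow> real \<Rightarrow> real \<Rightarrow> real" where
  "mirror_sum n f a x = f a x + f (- a) x + f (2 * real n - a) x"

lemma bspline_autocorr_folded:
  assumes "r \<le> p" "1 \<le> p" "real p + 1 \<le> real n" "0 < a" "a < real n"
  shows "real n ^ (2 * r) / real n * bspline_autocorr p r (a - v)
    = integral {0..1} (\<lambda>x. sym_centredB_deriv p r n (- a) x * sym_centredB_deriv p r n (- v) x)
      + integral {0..1} (\<lambda>x. sym_centredB_deriv p r n a x * sym_centredB_deriv p r n v x)
      + integral {0..1} (\<lambda>x. sym_centredB_deriv p r n (2 * real n - a) x *
                               sym_centredB_deriv p r n (2 * real n - v) x)"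
proof -
  let ?\<psi> = "sym_centredB_deriv p r n"
  have n: "0 < n" using assms(3) by simp
  have reflect0: "?\<psi> u (- x) * ?\<psi> v (- x) = ?\<psi> (- u) x * ?\<psi> (- v) x" for u v x
    using sym_centredB_deriv_product_reflect[where z = 0] by simp
  have reflect2: "?\<psi> u (2 - x) * ?\<psi> v (2 - x) = ?\<psi> (2 * real n - u) x * ?\<psi> (2 * real n - v) x" for u v x
    using sym_centredB_deriv_product_reflect[where z = 2] by (simp add: mult.commute)
  have "real n ^ (2 * r) / real n * bspline_autocorr p r (a - v) = integral {-1..2} (\<lambda>x. ?\<psi> a x * ?\<psi> v x)"
    by (rule integral_unique[symmetric], rule has_integral_sym_centredB_deriv_product[OF assms(1,2) n])
       (use assms in \<open>auto simp: field_simps\<close>)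
  also have "\<dots> = integral {0..1} (\<lambda>x. ?\<psi> (- a) x * ?\<psi> (- v) x) + integral {0..1} (\<lambda>x. ?\<psi> a x * ?\<psi> v x)
      + integral {0..1} (\<lambda>x. ?\<psi> (2 * real n - a) x * ?\<psi> (2 * real n - v) x)"
    by (simp add: integral_split_reflect sym_centredB_deriv_product_integrable[OF assms(1,2) n]
        reflect0 reflect2)
  finally show ?thesis .
qed

text \<open>Of the nine products, the three identities \<open>bspline_autocorr_folded\<close> for \<open>v = b, -b, 2n - b\<close>
  account for seven; the remaining two, and the two surplus terms of those identities, vanish
  on the unit interval.\<close>
lemma integral_mirror_sum_product:
  assumes "r \<le> p" "1 \<le> p" "real p + 1 \<le> real n"
    and "0 < a" "a < real n" "0 < b" "b < real n"
  shows "integral {0..1} (\<lambda>x. mirror_sum n (sym_centredB_deriv p r n) a x * mirror_sum n (sym_centredB_deriv p r n) b x)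
    = real n ^ (2 * r) / real n *
        (bspline_autocorr p r (a - b) + bspline_autocorr p r (a + b) + bspline_autocorr p r (a + b - 2 * real n))"
proof -
  let ?\<psi> = "sym_centredB_deriv p r n"
  define I where "I u v = integral {0..1} (\<lambda>x. ?\<psi> u x * ?\<psi> v x)" for u v
  have n: "0 < n" using assms(3) by simp
  have vanish: "I u v = 0" if "\<And>x. 0 \<le> x \<Longrightarrow> x \<le> 1 \<Longrightarrow> ?\<psi> u x * ?\<psi> v x = 0" for u v
    unfolding I_def by (subst integral_cong[of _ _ "\<lambda>_. 0"]) (use that in auto)
  have outside: "?\<psi> c x = 0" if "0 \<le> x" "x \<le> 1" "c + (real p + 1) / 2 < 0 \<or> real n + (real p + 1) / 2 < c"
    for c x
  proof (rule sym_centredB_deriv_eq_0[OF assms(1,2)])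
    have "0 \<le> real n * x" "real n * x \<le> real n" using that(1,2) by (auto simp: mult_left_le)
    with that(3) show "real n * x + (real p + 1) / 2 < c \<or> c + (real p + 1) / 2 < real n * x" by argo
  qed
  have "real n + (real p + 1) / 2 < 2 * real n + b" using assms by argo
  moreover have "b - 2 * real n + (real p + 1) / 2 < 0" using assms by argo
  ultimately have "I (2 * real n - a) (2 * real n + b) = 0" "I (- a) (b - 2 * real n) = 0"
    using outside by (auto intro!: vanish)
  moreover have "I (- a) (2 * real n - b) = 0" "I (2 * real n - a) (- b) = 0"
    using sym_centredB_deriv_product_eq_0[OF assms(1,2)] assms by (auto intro!: vanish)
  moreover have "integral {0..1} (\<lambda>x. mirror_sum n ?\<psi> a x * mirror_sum n ?\<psi> b x)
    = I a b + I a (- b) + I a (2 * real n - b) + I (- a) b + I (- a) (- b) + I (- a) (2 * real n - b)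
      + I (2 * real n - a) b + I (2 * real n - a) (- b) + I (2 * real n - a) (2 * real n - b)"
    unfolding mirror_sum_def I_def distrib_left distrib_right
    by (simp add: sym_centredB_deriv_product_integrable[OF assms(1,2) n] integrable_add integral_add)
  ultimately show ?thesis
    using bspline_autocorr_folded[OF assms(1-5), of b] bspline_autocorr_folded[OF assms(1-5), of "- b"]
      bspline_autocorr_folded[OF assms(1-5), of "2 * real n - b"]
    by (simp add: I_def algebra_simps)
qed

section \<open>The Neumann basis functions and their derivatives\<close>

definition mirror_knots :: "nat \<Rightarrow> nat \<Rightarrow> real \<Rightarrow> real set" where
  "mirror_knots p n a = centredB_knots p n a \<union> centredB_knots p n (- a) \<union> centredB_knots p n (2 * real n - a)"

lemma finite_mirror_knots [simp]: "finite (mirror_knots p n a)"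
  by (simp add: mirror_knots_def)

lemma centredB_eq_0: "(real p + 1) / 2 < \<bar>real n * x - c\<bar> \<Longrightarrow> centredB p n c x = 0"
  unfolding centredB_def by (rule cardBspline_eq_0) argo

lemma neumannBasis_eq_mirror_sum:
  assumes "real p + 1 \<le> real n" "1 \<le> i" "i \<le> n" "-1/2 < x" "x < 3/2"
  shows "neumannBasis p n i x = mirror_sum n (centredB_deriv p 0 n) (real i - 1/2) x"
proof -
  define a where "a = real i - 1/2"
  define g where "g m = centredB p n (a + 2 * real_of_int m * real n) x
                         + centredB p n (- a + 2 * real_of_int m * real n) x" for m :: int
  have a: "0 < a" "a < real n" using assms(2,3) by (auto simp: a_def)
  have nx: "- real n / 2 < real n * x" "real n * x < 3 / 2 * real n"
    using assms(1,4,5) mult_strict_left_mono[of x "3/2" "real n"] mult_strict_left_mono[of "-1/2" x "real n"]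
    by auto
  have far: "centredB p n c x = 0" if "c \<le> - real n \<or> 2 * real n \<le> c" for c
    using that nx assms(1) by (intro centredB_eq_0) argo
  have "g m = 0" if "m \<notin> {0, 1}" for m
  proof -
    have "2 \<le> real_of_int m \<or> real_of_int m \<le> -1" using that by auto
    then have "4 * real n \<le> 2 * real_of_int m * real n \<or> 2 * real_of_int m * real n \<le> - 2 * real n"
      using mult_right_mono[of 2 "real_of_int m" "real n"] mult_right_mono[of "real_of_int m" "-1" "real n"]
      by auto
    then have "a + 2 * real_of_int m * real n \<le> - real n \<or> 2 * real n \<le> a + 2 * real_of_int m * real n"
      "- a + 2 * real_of_int m * real n \<le> - real n \<or> 2 * real n \<le> - a + 2 * real_of_int m * real n"
      using a by argo+
    then show ?thesis unfolding g_def using far by simp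
  qed
  then have "neumannBasis p n i x = (\<Sum>m\<in>{0, 1}. g m)"
    unfolding neumannBasis_def a_def[symmetric] g_def[symmetric]
    by (subst infsum_cong_neutral[where T = "{0, 1}"]) auto
  also have "\<dots> = mirror_sum n (centredB p n) a x"
    using far[of "a + 2 * real n"] a by (simp add: g_def mirror_sum_def)
  finally show ?thesis by (simp add: a_def centredB_eq_centredB_deriv)
qed

lemma mirror_sum_centredB_deriv_has_derivative:
  assumes "0 < n" "Suc r < p \<or> (Suc r = p \<and> x \<notin> mirror_knots p n a)"
  shows "(mirror_sum n (centredB_deriv p r n) a has_real_derivative
           mirror_sum n (centredB_deriv p (Suc r) n) a x) (at x)"
  unfolding mirror_sum_def
  by (intro DERIV_add centredB_deriv_has_derivative) (use assms in \<open>auto simp: mirror_knots_def\<close>)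

lemma nth_deriv_neumannBasis:
  assumes "r \<le> p" "real p + 1 \<le> real n" "1 \<le> i" "i \<le> n" "0 \<le> x" "x \<le> 1"
    and "x \<notin> mirror_knots p n (real i - 1/2)"
  shows "nth_deriv r (neumannBasis p n i) x = mirror_sum n (centredB_deriv p r n) (real i - 1/2) x"
proof -
  define f where "f k = mirror_sum n (centredB_deriv p k n) (real i - 1/2)" for k
  have n: "0 < n" using assms(2) by simp
  have smooth: "(f k has_real_derivative f (Suc k) y) (at y)" if "Suc k < p" for k y
    unfolding f_def using mirror_sum_centredB_deriv_has_derivative[OF n] that by simp
  have "\<forall>\<^sub>F y in nhds x. neumannBasis p n i y = f 0 y"
    using eventually_nhds_in_open[of "{-1/2<..<3/2}" x] assms(5,6)
    by (auto elim!: eventually_mono simp: f_def neumannBasis_eq_mirror_sum[OF assms(2-4)])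
  then have "nth_deriv r (neumannBasis p n i) x = (deriv ^^ r) (f 0) x"
    unfolding nth_deriv_def by (rule higher_deriv_cong_ev) simp
  also have "\<dots> = f r x"
  proof (cases "r < p")
    case True
    then show ?thesis using funpow_deriv_eq[of p f r] smooth by simp
  next
    case False
    show ?thesis
    proof (cases r)
      case (Suc k)
      with False assms(1) have k: "p = Suc k" "r = Suc k" by simp_all
      have "(f k has_real_derivative f (Suc k) x) (at x)"
        unfolding f_def by (rule mirror_sum_centredB_deriv_has_derivative[OF n]) (use assms(7) k in simp)
      then show ?thesis
        unfolding k(2) by (rule funpow_deriv_eq_last[rotated]) (use smooth k in simp)
    qed simp
  qed
  finally show ?thesis by (simp add: f_def)
qed

lemma Xmat_eq:
  assumes "r \<le> p" "1 \<le> p" "real p + 1 \<le> real n" "i \<in> {1..n}" "j \<in> {1..n}"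
  shows "Xmat p r n i j = real n ^ (2 * r) / real n *
           (bspline_autocorr p r (real i - real j) + bspline_autocorr p r (real i + real j - 1)
            + bspline_autocorr p r (real i + real j - 1 - 2 * real n))"
proof -
  let ?sym = "mirror_sum n (sym_centredB_deriv p r n)" and ?a = "real i - 1/2" and ?b = "real j - 1/2"
  have n: "0 < n" using assms(3) by simp
  have mirror_sym: "?sym c x = mirror_sum n (centredB_deriv p r n) c x" if "x \<notin> mirror_knots p n c" for c x
    using that sym_centredB_deriv_eq[OF n assms(1,2)] by (simp add: mirror_sum_def mirror_knots_def)
  have "Xmat p r n i j = integral {0..1} (\<lambda>x. ?sym ?a x * ?sym ?b x)"
    unfolding Xmat_def
  proof (rule integral_spike[where S = "mirror_knots p n ?a \<union> mirror_knots p n ?b"])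
    fix x assume "x \<in> {0..1} - (mirror_knots p n ?a \<union> mirror_knots p n ?b)"
    then show "?sym ?a x * ?sym ?b x = nth_deriv r (neumannBasis p n i) x * nth_deriv r (neumannBasis p n j) x"
      using assms nth_deriv_neumannBasis[OF assms(1,3)] by (simp add: mirror_sym)
  qed (simp add: negligible_finite)
  also have "\<dots> = real n ^ (2 * r) / real n *
      (bspline_autocorr p r (?a - ?b) + bspline_autocorr p r (?a + ?b)
       + bspline_autocorr p r (?a + ?b - 2 * real n))"
    by (rule integral_mirror_sum_product) (use assms in auto)
  finally show ?thesis by (simp add: algebra_simps)
qed

lemma alphaSeq_eq_bspline_autocorr: "r \<le> p \<Longrightarrow> alphaSeq p r k = bspline_autocorr p r (real k)"
  using bspline_deriv_eq_0_left[of "real p + 1 - real k" "2 * r" "2 * p + 1"]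
  by (auto simp: alphaSeq_def bspline_autocorr_def nth_deriv_cardBspline)

lemma toeplitzM_plus_hankelM_alphaSeq:
  assumes "r \<le> p" "1 \<le> p" "i \<in> {1..n}" "j \<in> {1..n}"
  shows "toeplitzM (alphaSeq p r) i j + hankelM n (alphaSeq p r) i j
    = bspline_autocorr p r (real i - real j) + bspline_autocorr p r (real i + real j - 1)
      + bspline_autocorr p r (real i + real j - 1 - 2 * real n)"
proof -
  have "toeplitzM (alphaSeq p r) i j = bspline_autocorr p r (real i - real j)"
    using bspline_autocorr_minus[OF assms(1,2), of "real i - real j"]
    by (auto simp: toeplitzM_def alphaSeq_eq_bspline_autocorr[OF assms(1)] of_nat_diff)
  moreover have "hankelM n (alphaSeq p r) i j
      = bspline_autocorr p r (real i + real j - 1) + bspline_autocorr p r (real i + real j - 1 - 2 * real n)"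
    using bspline_autocorr_minus[OF assms(1,2), of "real i + real j - 1 - 2 * real n"] assms(3,4)
    by (simp add: hankelM_def alphaSeq_eq_bspline_autocorr[OF assms(1)] of_nat_diff algebra_simps)
  ultimately show ?thesis by simp
qed

theorem mainTheorem6:
  fixes p n r :: nat
  assumes "p \<ge> 1" and "n \<ge> 1" and "r \<le> p"
    and "n \<ge> max (2 * p - p div 2) (2 * p - 2 * (p div 2) + 1)"
  shows "\<forall>i\<in>{1..n}. \<forall>j\<in>{1..n}.
    Xmat p r n i j = real n powi (2 * int r - 1) *
      (toeplitzM (alphaSeq p r) i j + hankelM n (alphaSeq p r) i j)"
proof (intro ballI)
  fix i j assume ij: "i \<in> {1..n}" "j \<in> {1..n}"
  \<comment> \<open>of the lower bound on \<open>n\<close> only this consequence is needed\<close>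
  have "p + 1 \<le> n" using assms(1,4) by (simp add: max_def split: if_splits)
  then have n: "real p + 1 \<le> real n" by simp
  have "real n powi (2 * int r - 1) = real n ^ (2 * r) / real n"
    using n power_int_diff[of "real n" "int (2 * r)" 1] by (simp add: power_int_of_nat[symmetric])
  then show "Xmat p r n i j = real n powi (2 * int r - 1) *
      (toeplitzM (alphaSeq p r) i j + hankelM n (alphaSeq p r) i j)"
    using Xmat_eq[OF assms(3,1) n ij] toeplitzM_plus_hankelM_alphaSeq[OF assms(3,1) ij] by simp
qed

end
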